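(* Let $(X,\to)$ be a finitely branching transition system over $A$. Then $\mathit{lo}_b$ is $c_b$-compatible, i.e. $\mathit{lo}_b(c_b(\mathcal S))\subseteq c_b(\mathit{lo}_b(\mathcal S))$ for all $\mathcal S\subseteq\mathcal P(X)$.
   Context: A transition system over $A$: $(X,\to)$, $\to\subseteq X\times A\times X$; finitely branching: $\{(a,x')\mid x\xrightarrow{a}x'\}$ finite for each $x$. $\Diamond_a(S)=\{x\mid\exists x'\in S\colon x\xrightarrow{a}x'\}$. $\mathit{lo}_b(\mathcal S)=\bigcup_{a\in A}\{\Diamond_a(S)\mid S\in\mathrm{cl}^{\cup,\lnot}_f(\mathcal S)\}$, where $\mathrm{cl}^{\cup,\lnot}_f(\mathcal S)$ is the closure of $\mathcal S$ under finite unions and complement. $\alpha_b(\mathcal S)=\{(x,x')\mid\forall S\in\mathcal S\colon(x\in S\iff x'\in S)\}$, $\gamma_b(R)=\{S\subseteq X\mid\forall(x,x')\in R\colon(x\in S\iff x'\in S)\}$ for equivalences $R$ on $X$, and $c_b=\gamma_b\circ\alpha_b$. *)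

theory Defs
  imports Main
begin

text \<open>A transition system over the label type 'a on the state type 'x is a
  relation T :: ('x \<times> 'a \<times> 'x) set; the state set X is UNIV :: 'x set and
  the label set A is UNIV :: 'a set.\<close>

definition finitely_branching :: "('x \<times> 'a \<times> 'x) set \<Rightarrow> bool" where
  "finitely_branching T \<longleftrightarrow> (\<forall>x. finite {(a, x'). (x, a, x') \<in> T})"

definition diamond :: "('x \<times> 'a \<times> 'x) set \<Rightarrow> 'a \<Rightarrow> 'x set \<Rightarrow> 'x set" where
  "diamond T a S = {x. \<exists>x'\<in>S. (x, a, x') \<in> T}"

inductive_set cl_union_neg :: "'x set set \<Rightarrow> 'x set set" for \<S> where
  base: "S \<in> \<S> \<Longrightarrow> S \<in> cl_union_neg \<S>"
| empty: "{} \<in> cl_union_neg \<S>"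
| union: "S1 \<in> cl_union_neg \<S> \<Longrightarrow> S2 \<in> cl_union_neg \<S> \<Longrightarrow> S1 \<union> S2 \<in> cl_union_neg \<S>"
| compl: "S \<in> cl_union_neg \<S> \<Longrightarrow> - S \<in> cl_union_neg \<S>"

definition lo_b :: "('x \<times> 'a \<times> 'x) set \<Rightarrow> 'x set set \<Rightarrow> 'x set set" where
  "lo_b T \<S> = (\<Union>a. {diamond T a S | S. S \<in> cl_union_neg \<S>})"

definition alpha_b :: "'x set set \<Rightarrow> ('x \<times> 'x) set" where
  "alpha_b \<S> = {(x, x'). \<forall>S\<in>\<S>. (x \<in> S \<longleftrightarrow> x' \<in> S)}"

definition gamma_b :: "('x \<times> 'x) set \<Rightarrow> 'x set set" where
  "gamma_b R = {S. \<forall>(x, x')\<in>R. (x \<in> S \<longleftrightarrow> x' \<in> S)}"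

definition c_b :: "'x set set \<Rightarrow> 'x set set" where
  "c_b \<S> = gamma_b (alpha_b \<S>)"

end

theory Submission
  imports Defs
begin

text \<open>Sets in \<open>c_b \<S>\<close> are unions of \<open>alpha_b \<S>\<close>-classes and are closed under
  union and complement, so \<open>lo_b T (c_b \<S>)\<close> consists of the sets \<open>diamond T a S\<close>
  with \<open>S \<in> c_b \<S>\<close>. Suppose \<open>x\<close> and \<open>y\<close> agree on \<open>lo_b T \<S>\<close> and
  \<open>x \<rightarrow>a x'\<close> with \<open>x' \<in> S\<close>. Every \<open>a\<close>-successor \<open>y'\<close> of \<open>y\<close> outside \<open>S\<close>
  is separated from \<open>x'\<close> by a set of \<open>\<S>\<close> or its complement; as there are only
  finitely many such \<open>y'\<close>, the intersection \<open>D\<close> of these separators lies in the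
  Boolean closure of \<open>\<S>\<close>. Then \<open>x \<in> diamond T a D\<close>, hence \<open>y \<in> diamond T a D\<close>,
  which yields an \<open>a\<close>-successor of \<open>y\<close> inside \<open>S\<close>.\<close>

lemma cl_union_neg_UNIV: "UNIV \<in> cl_union_neg \<S>"
  using cl_union_neg.compl[OF cl_union_neg.empty] by simp

lemma cl_union_neg_Int:
  assumes "A \<in> cl_union_neg \<S>" and "B \<in> cl_union_neg \<S>"
  shows "A \<inter> B \<in> cl_union_neg \<S>"
proof -
  have "- (- A \<union> - B) \<in> cl_union_neg \<S>"
    by (intro cl_union_neg.compl cl_union_neg.union assms)
  then show ?thesis by simp
qed

lemma cl_union_neg_gamma_b: "cl_union_neg (gamma_b R) = gamma_b R"
proof
  show "cl_union_neg (gamma_b R) \<subseteq> gamma_b R"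
  proof
    fix S assume "S \<in> cl_union_neg (gamma_b R)"
    then show "S \<in> gamma_b R"
      by induction (auto simp: gamma_b_def)
  qed
qed (auto intro: cl_union_neg.base)

lemma sym_alpha_b: "sym (alpha_b \<S>)"
  by (auto simp: sym_def alpha_b_def)

lemma not_alpha_b_if_separated_in_c_b:
  assumes "S \<in> c_b \<S>" and "x \<in> S" and "y \<notin> S"
  shows "(x, y) \<notin> alpha_b \<S>"
  using assms by (auto simp: c_b_def gamma_b_def)

lemma cl_union_neg_separates_if_not_alpha_b:
  assumes "(x, y) \<notin> alpha_b \<S>"
  obtains B where "B \<in> cl_union_neg \<S>" and "x \<in> B" and "y \<notin> B"
proof -
  obtain S where S: "S \<in> \<S>" and "(x \<in> S) \<noteq> (y \<in> S)"
    using assms by (auto simp: alpha_b_def)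
  then consider "x \<in> S" "y \<notin> S" | "x \<in> - S" "y \<notin> - S"
    by blast
  then show thesis
  proof cases
    case 1
    then show thesis using that[of S] cl_union_neg.base[OF S] by simp
  next
    case 2
    then show thesis using that[of "- S"] cl_union_neg.compl[OF cl_union_neg.base[OF S]] by simp
  qed
qed

lemma cl_union_neg_separates_finite:
  assumes "finite Y" and "\<forall>y\<in>Y. (x, y) \<notin> alpha_b \<S>"
  shows "\<exists>D\<in>cl_union_neg \<S>. x \<in> D \<and> D \<inter> Y = {}"
  using assms
proof (induction Y rule: finite_induct)
  case empty
  then show ?case using cl_union_neg_UNIV by blast
next
  case (insert y Y)
  then obtain D where D: "D \<in> cl_union_neg \<S>" "x \<in> D" "D \<inter> Y = {}"
    by blast
  have "(x, y) \<notin> alpha_b \<S>"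
    using insert.prems by simp
  then obtain B where B: "B \<in> cl_union_neg \<S>" "x \<in> B" "y \<notin> B"
    by (rule cl_union_neg_separates_if_not_alpha_b)
  have "B \<inter> D \<in> cl_union_neg \<S>"
    using B(1) D(1) by (rule cl_union_neg_Int)
  moreover have "B \<inter> D \<inter> insert y Y = {}"
    using B(3) D(3) by auto
  moreover have "x \<in> B \<inter> D"
    using B(2) D(2) by simp
  ultimately show ?case
    by meson
qed

lemma finite_successors:
  assumes "finitely_branching T"
  shows "finite {y'. (y, a, y') \<in> T}"
proof -
  have "{y'. (y, a, y') \<in> T} \<subseteq> snd ` {(b, y'). (y, b, y') \<in> T}"
    by force
  moreover have "finite {(b, y'). (y, b, y') \<in> T}"
    using assms by (simp add: finitely_branching_def)
  ultimately show ?thesis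
    by (meson finite_imageI finite_subset)
qed

lemma diamond_c_b_transfer:
  assumes fb: "finitely_branching T"
    and xy: "(x, y) \<in> alpha_b (lo_b T \<S>)"
    and S: "S \<in> c_b \<S>"
    and x: "x \<in> diamond T a S"
  shows "y \<in> diamond T a S"
proof -
  obtain x' where "x' \<in> S" and "(x, a, x') \<in> T"
    using x by (auto simp: diamond_def)
  define Y where "Y = {y'. (y, a, y') \<in> T} - S"
  have "finite Y"
    unfolding Y_def using finite_successors[OF fb] by blast
  moreover have "\<forall>y'\<in>Y. (x', y') \<notin> alpha_b \<S>"
    using not_alpha_b_if_separated_in_c_b[OF S \<open>x' \<in> S\<close>] by (auto simp: Y_def)
  ultimately obtain D where D: "D \<in> cl_union_neg \<S>" "x' \<in> D" "D \<inter> Y = {}"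
    using cl_union_neg_separates_finite by meson
  have "diamond T a D \<in> lo_b T \<S>"
    using D(1) by (auto simp: lo_b_def)
  moreover have "x \<in> diamond T a D"
    using D(2) \<open>(x, a, x') \<in> T\<close> by (auto simp: diamond_def)
  ultimately have "y \<in> diamond T a D"
    using xy by (auto simp: alpha_b_def)
  then show ?thesis
    using D(3) by (auto simp: diamond_def Y_def)
qed

theorem mainTheorem9:
  fixes T :: "('x \<times> 'a \<times> 'x) set" and \<S> :: "'x set set"
  assumes "finitely_branching T"
  shows "lo_b T (c_b \<S>) \<subseteq> c_b (lo_b T \<S>)"
proof
  fix U assume "U \<in> lo_b T (c_b \<S>)"
  then obtain a S where U: "U = diamond T a S" and S: "S \<in> c_b \<S>"
    by (auto simp: lo_b_def c_b_def cl_union_neg_gamma_b)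
  have "x \<in> U \<longleftrightarrow> y \<in> U" if xy: "(x, y) \<in> alpha_b (lo_b T \<S>)" for x y
  proof -
    have "(y, x) \<in> alpha_b (lo_b T \<S>)"
      using sym_alpha_b xy by (rule symD)
    then show ?thesis
      unfolding U using xy diamond_c_b_transfer[OF assms _ S] by blast
  qed
  then show "U \<in> c_b (lo_b T \<S>)"
    by (auto simp: c_b_def gamma_b_def)
qed

end
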